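(* Let $R$ be a commutative ring with nonzero identity and $\delta$ an expansion of ideals of $R$. (1) Let $I$ be a $\delta$-primary ideal of $R$ with $\delta(I)\neq R$. Then $I$ is a $\delta$-$n$-ideal of $R$ if and only if $I\subseteq\sqrt{0}$. (2) Let $I$ be a prime ideal of $R$ with $\delta(I)\neq R$. Then $I$ is a $\delta$-$n$-ideal of $R$ if and only if $I=\sqrt{0}$.
   Context: An expansion of ideals of a ring $R$ is a map $\delta$ from the set of ideals of $R$ to itself such that $I\subseteq\delta(I)$ for every ideal $I$, and $\delta(I)\subseteq\delta(J)$ whenever $I\subseteq J$. $\sqrt{0}$ denotes the nilradical of $R$. Given an expansion $\delta$, a proper ideal $I$ of $R$ is a $\delta$-$n$-ideal if whenever $a,b\in R$ with $ab\in I$ and $a\notin\sqrt{0}$, then $b\in\delta(I)$; it is $\delta$-primary if whenever $a,b\in R$ with $ab\in I$ and $a\notin I$, then $b\in\delta(I)$. *)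

theory Defs
  imports "HOL-Algebra.Ideal"
begin

definition nilradical :: "('a, 'b) ring_scheme \<Rightarrow> 'a set" where
  "nilradical R = {a \<in> carrier R. \<exists>n::nat. a [^]\<^bsub>R\<^esub> n = \<zero>\<^bsub>R\<^esub>}"

definition expansion :: "('a, 'b) ring_scheme \<Rightarrow> ('a set \<Rightarrow> 'a set) \<Rightarrow> bool" where
  "expansion R \<delta> \<longleftrightarrow>
     (\<forall>I. ideal I R \<longrightarrow> ideal (\<delta> I) R \<and> I \<subseteq> \<delta> I) \<and>
     (\<forall>I J. ideal I R \<longrightarrow> ideal J R \<longrightarrow> I \<subseteq> J \<longrightarrow> \<delta> I \<subseteq> \<delta> J)"

definition delta_n_ideal :: "('a, 'b) ring_scheme \<Rightarrow> ('a set \<Rightarrow> 'a set) \<Rightarrow> 'a set \<Rightarrow> bool" where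
  "delta_n_ideal R \<delta> I \<longleftrightarrow> ideal I R \<and> I \<noteq> carrier R \<and>
     (\<forall>a \<in> carrier R. \<forall>b \<in> carrier R.
        a \<otimes>\<^bsub>R\<^esub> b \<in> I \<longrightarrow> a \<notin> nilradical R \<longrightarrow> b \<in> \<delta> I)"

definition delta_primary :: "('a, 'b) ring_scheme \<Rightarrow> ('a set \<Rightarrow> 'a set) \<Rightarrow> 'a set \<Rightarrow> bool" where
  "delta_primary R \<delta> I \<longleftrightarrow> ideal I R \<and> I \<noteq> carrier R \<and>
     (\<forall>a \<in> carrier R. \<forall>b \<in> carrier R.
        a \<otimes>\<^bsub>R\<^esub> b \<in> I \<longrightarrow> a \<notin> I \<longrightarrow> b \<in> \<delta> I)"

end

theory Submission
  imports Defs
begin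

text \<open>For a \<open>\<delta>\<close>-primary ideal \<open>I\<close> the two defining conditions differ only in the hypothesis
  on \<open>a\<close> (\<open>a \<notin> I\<close> versus \<open>a \<notin> \<surd>0\<close>), so they agree once \<open>I \<subseteq> \<surd>0\<close>. Conversely, if \<open>I\<close> is a
  \<open>\<delta>\<close>-\<open>n\<close>-ideal and some \<open>a \<in> I\<close> were not nilpotent, then \<open>a \<cdot> 1 \<in> I\<close> would put \<open>1\<close> into the
  proper ideal \<open>\<delta>(I)\<close>. A prime ideal is \<open>\<delta>\<close>-primary because \<open>I \<subseteq> \<delta>(I)\<close>, and it contains every
  nilpotent element, so for it \<open>I \<subseteq> \<surd>0\<close> means \<open>I = \<surd>0\<close>.\<close>

lemma expansion_subset:
  assumes "expansion R \<delta>" "ideal I R"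
  shows "I \<subseteq> \<delta> I"
  using assms unfolding expansion_def by blast

lemma expansion_ideal:
  assumes "expansion R \<delta>" "ideal I R"
  shows "ideal (\<delta> I) R"
  using assms unfolding expansion_def by blast

lemma delta_primary_imp_delta_n_ideal:
  assumes "delta_primary R \<delta> I" "I \<subseteq> nilradical R"
  shows "delta_n_ideal R \<delta> I"
  using assms unfolding delta_primary_def delta_n_ideal_def by blast

lemma delta_n_ideal_subset_nilradical:
  fixes R (structure)
  assumes "ring R" "expansion R \<delta>" "delta_n_ideal R \<delta> I" "\<delta> I \<noteq> carrier R"
  shows "I \<subseteq> nilradical R"
proof
  fix a assume "a \<in> I"
  interpret ring R by fact
  have I: "ideal I R" using assms(3) unfolding delta_n_ideal_def by blast
  have a: "a \<in> carrier R" using I \<open>a \<in> I\<close> by (rule ideal.Icarr)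
  show "a \<in> nilradical R"
  proof (rule ccontr)
    assume "a \<notin> nilradical R"
    moreover have "a \<otimes> \<one> \<in> I" using \<open>a \<in> I\<close> a by simp
    ultimately have "\<one> \<in> \<delta> I"
      using assms(3) a unfolding delta_n_ideal_def by blast
    then show False
      using ideal.one_imp_carrier[OF expansion_ideal[OF assms(2) I]] assms(4) by blast
  qed
qed

lemma delta_primary_delta_n_ideal_iff:
  assumes "ring R" "expansion R \<delta>" "delta_primary R \<delta> I" "\<delta> I \<noteq> carrier R"
  shows "delta_n_ideal R \<delta> I \<longleftrightarrow> I \<subseteq> nilradical R"
  using delta_n_ideal_subset_nilradical[OF assms(1,2) _ assms(4)]
    delta_primary_imp_delta_n_ideal[OF assms(3)] by blast

lemma primeideal_imp_delta_primary:
  assumes "expansion R \<delta>" "primeideal I R"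
  shows "delta_primary R \<delta> I"
proof -
  interpret primeideal I R by fact
  have "I \<subseteq> \<delta> I" using assms(1) is_ideal by (rule expansion_subset)
  then show ?thesis
    using I_prime I_notcarr is_ideal unfolding delta_primary_def by blast
qed

lemma (in primeideal) nat_pow_mem_imp_mem:
  assumes "a \<in> carrier R" "a [^] (n::nat) \<in> I"
  shows "a \<in> I"
  using assms(2)
proof (induction n)
  case 0
  then show ?case using I_notcarr one_imp_carrier by simp
next
  case (Suc n)
  then have "a [^] n \<otimes> a \<in> I" by simp
  then show ?case using I_prime[of "a [^] n" a] assms(1) Suc.IH by auto
qed

lemma (in primeideal) nilradical_subset: "nilradical R \<subseteq> I"
proof
  fix a assume "a \<in> nilradical R"
  then obtain n :: nat where "a \<in> carrier R" "a [^] n = \<zero>"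
    unfolding nilradical_def by blast
  then show "a \<in> I" using nat_pow_mem_imp_mem[of a n] by simp
qed

theorem proposition2p6:
  fixes R (structure) and \<delta> :: "'a set \<Rightarrow> 'a set"
  assumes "cring R" and "\<one> \<noteq> \<zero>" and "expansion R \<delta>"
  shows "(\<forall>I. delta_primary R \<delta> I \<longrightarrow> \<delta> I \<noteq> carrier R \<longrightarrow>
            (delta_n_ideal R \<delta> I \<longleftrightarrow> I \<subseteq> nilradical R))
       \<and> (\<forall>I. primeideal I R \<longrightarrow> \<delta> I \<noteq> carrier R \<longrightarrow>
            (delta_n_ideal R \<delta> I \<longleftrightarrow> I = nilradical R))"
proof (intro conjI allI impI)
  have R: "ring R" using assms(1) by (rule cring.axioms(1))
  fix I
  show "delta_n_ideal R \<delta> I \<longleftrightarrow> I \<subseteq> nilradical R"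
    if "delta_primary R \<delta> I" "\<delta> I \<noteq> carrier R"
    using R assms(3) that by (rule delta_primary_delta_n_ideal_iff)
  show "delta_n_ideal R \<delta> I \<longleftrightarrow> I = nilradical R"
    if "primeideal I R" "\<delta> I \<noteq> carrier R"
  proof -
    have "delta_primary R \<delta> I" using assms(3) that(1) by (rule primeideal_imp_delta_primary)
    then have "delta_n_ideal R \<delta> I \<longleftrightarrow> I \<subseteq> nilradical R"
      using R assms(3) that(2) by (intro delta_primary_delta_n_ideal_iff)
    also have "\<dots> \<longleftrightarrow> I = nilradical R"
      using primeideal.nilradical_subset[OF that(1)] by blast
    finally show ?thesis .
  qed
qed
end
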